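(* For any vertex $x\in V$, any set $A\subseteq V$, any integer $T\geq 0$ and any $\lambda>0$, the volume-biased evolving set process $(S_t)$ started from $S_0=\{x\}$ satisfies \[ \widehat{\mathbf P}_x\Big[\max_{0\le t\le T}\frac{\mu(S_t\setminus A)}{\mu(S_t)} > \lambda\,\varepsilon_x(T,A)\Big] < \frac1\lambda, \] where $\varepsilon_x(T,A)$ is the probability that a lazy random walk $(X_i)$ started at $X_0=x$ satisfies $X_j\notin A$ for some $j\in\{0,1,\dots,T\}$.
   Context: Let $G=(V,E)$ be a finite simple undirected graph in which every vertex has positive degree $d(x)$. For $S\subseteq V$, $\mu(S)=\sum_{x\in S}d(x)$. The lazy random walk has transition kernel $p(x,y)=1/(2d(x))$ if $\{x,y\}\in E$, $p(x,x)=1/2$, and $0$ otherwise; $p(x,S)=\sum_{y\in S}p(x,y)$. The evolving set process (ESP): from state $S$, pick $U$ uniform on $[0,1]$ and move to $\{y: p(y,S)\geq U\}$; $K(S,S')$ denotes its transition kernel. The volume-biased ESP is the Markov chain on nonempty subsets with kernel $\widehat K(S,S')=\frac{\mu(S')}{\mu(S)}K(S,S')$; $\widehat{\mathbf P}_x$ denotes its law started at $\{x\}$. *)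

theory Defs
  imports "HOL-Analysis.Analysis"
begin

definition simple_graph :: "'a set \<Rightarrow> ('a \<Rightarrow> 'a \<Rightarrow> bool) \<Rightarrow> bool" where
  "simple_graph V E \<longleftrightarrow> finite V \<and> V \<noteq> {}
     \<and> (\<forall>x y. E x y \<longrightarrow> x \<in> V \<and> y \<in> V)
     \<and> (\<forall>x y. E x y \<longrightarrow> E y x)
     \<and> (\<forall>x. \<not> E x x)"

definition deg :: "'a set \<Rightarrow> ('a \<Rightarrow> 'a \<Rightarrow> bool) \<Rightarrow> 'a \<Rightarrow> nat" where
  "deg V E x = card {y \<in> V. E x y}"

definition vol :: "'a set \<Rightarrow> ('a \<Rightarrow> 'a \<Rightarrow> bool) \<Rightarrow> 'a set \<Rightarrow> real" where
  "vol V E S = (\<Sum>x\<in>S. real (deg V E x))"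

definition lazy_p :: "'a set \<Rightarrow> ('a \<Rightarrow> 'a \<Rightarrow> bool) \<Rightarrow> 'a \<Rightarrow> 'a \<Rightarrow> real" where
  "lazy_p V E x y =
     (if E x y then 1 / (2 * real (deg V E x)) else if x = y then 1/2 else 0)"

definition lazy_pS :: "'a set \<Rightarrow> ('a \<Rightarrow> 'a \<Rightarrow> bool) \<Rightarrow> 'a \<Rightarrow> 'a set \<Rightarrow> real" where
  "lazy_pS V E x S = (\<Sum>y\<in>S. lazy_p V E x y)"

text \<open>Evolving set process kernel: U uniform on [0,1], new state {y. p(y,S) \<ge> U}.\<close>
definition esp_K :: "'a set \<Rightarrow> ('a \<Rightarrow> 'a \<Rightarrow> bool) \<Rightarrow> 'a set \<Rightarrow> 'a set \<Rightarrow> real" where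
  "esp_K V E S S' =
     measure lborel {u::real \<in> {0..1}. {y \<in> V. lazy_pS V E y S \<ge> u} = S'}"

definition esp_hatK :: "'a set \<Rightarrow> ('a \<Rightarrow> 'a \<Rightarrow> bool) \<Rightarrow> 'a set \<Rightarrow> 'a set \<Rightarrow> real" where
  "esp_hatK V E S S' = vol V E S' / vol V E S * esp_K V E S S'"

definition path_prob :: "'b set \<Rightarrow> ('b \<Rightarrow> 'b \<Rightarrow> real) \<Rightarrow> 'b \<Rightarrow> nat \<Rightarrow> ('b list \<Rightarrow> bool) \<Rightarrow> real" where
  "path_prob St K s0 T P =
     (\<Sum>ss \<in> {ss. length ss = Suc T \<and> set ss \<subseteq> St \<and> hd ss = s0 \<and> P ss}.
        \<Prod>t<T. K (ss ! t) (ss ! Suc t))"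

definition eps_escape :: "'a set \<Rightarrow> ('a \<Rightarrow> 'a \<Rightarrow> bool) \<Rightarrow> 'a \<Rightarrow> nat \<Rightarrow> 'a set \<Rightarrow> real" where
  "eps_escape V E x T A =
     path_prob V (lazy_p V E) x T (\<lambda>xs. \<exists>j\<le>T. xs ! j \<notin> A)"

end

theory Submission
  imports Defs
begin

(* Let h_t(y) be the probability that the lazy walk started at y
   leaves A within T - t steps, and let N_t(S) be the degree-weighted average of
   h_t over S.  Two facts make N_t(S_t) a nonnegative supermartingale for the
   volume-biased evolving set process: (i) the volume-biased ESP intertwines with
   the lazy walk, i.e. averaging a degree-weighted mean over one ESP step equals
   the degree-weighted mean of one walk step (reversibility plus
   P[y \<in> S'] = p(y,S)); (ii) h is superharmonic, p h_{t+1} \<le> h_t.  Moreover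
   N_t(S) \<ge> \<mu>(S - A)/\<mu>(S) since h_t = 1 off A, and N_0({x}) = \<epsilon>_x(T,A).  The claim
   is then Doob's maximal inequality for nonnegative supermartingales on a
   finite Markov chain, which we prove by optional stopping at the first time
   the process exceeds the level. *)

section \<open>Expectations over trajectories of a finite Markov chain\<close>

definition path_exp :: "'b set \<Rightarrow> ('b \<Rightarrow> 'b \<Rightarrow> real) \<Rightarrow> 'b \<Rightarrow> nat \<Rightarrow> ('b list \<Rightarrow> real) \<Rightarrow> real" where
  "path_exp St K s0 T f = (\<Sum>ss\<in>{ss. length ss = Suc T \<and> set ss \<subseteq> St \<and> hd ss = s0}.
        (\<Prod>t<T. K (ss ! t) (ss ! Suc t)) * f ss)"

lemma finite_paths: "finite St \<Longrightarrow> finite {ss. length ss = n \<and> set ss \<subseteq> St \<and> P ss}"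
  by (rule finite_subset[OF _ finite_lists_length_eq[of St n]]) auto

lemma path_prob_as_exp:
  "finite St \<Longrightarrow> path_prob St K s0 T P = path_exp St K s0 T (\<lambda>ss. if P ss then 1 else 0)"
  unfolding path_prob_def path_exp_def
  by (rule sum.mono_neutral_cong_left) (auto intro: finite_paths)

lemma path_weight_nonneg:
  assumes "\<And>s s'. s \<in> St \<Longrightarrow> s' \<in> St \<Longrightarrow> K s s' \<ge> (0::real)"
    and "length ss = Suc T" and "set ss \<subseteq> St"
  shows "(\<Prod>t<T. K (ss ! t) (ss ! Suc t)) \<ge> 0"
proof (rule prod_nonneg, rule assms(1))
  fix t assume "t \<in> {..<T}"
  then have "t < length ss" "Suc t < length ss" using assms(2) by auto
  then show "ss ! t \<in> St" "ss ! Suc t \<in> St" using assms(3) nth_mem by blast+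
qed

lemma path_exp_cong:
  "(\<And>ss. length ss = Suc T \<Longrightarrow> set ss \<subseteq> St \<Longrightarrow> hd ss = s0 \<Longrightarrow> f ss = g ss)
   \<Longrightarrow> path_exp St K s0 T f = path_exp St K s0 T g"
  unfolding path_exp_def by (intro sum.cong) auto

lemma path_exp_mono:
  assumes "\<And>s s'. s \<in> St \<Longrightarrow> s' \<in> St \<Longrightarrow> K s s' \<ge> 0"
    and "\<And>ss. length ss = Suc T \<Longrightarrow> set ss \<subseteq> St \<Longrightarrow> hd ss = s0 \<Longrightarrow> f ss \<le> g ss"
  shows "path_exp St K s0 T f \<le> path_exp St K s0 T g"
  unfolding path_exp_def
  using assms path_weight_nonneg[OF assms(1)] by (intro sum_mono mult_left_mono) auto

lemma path_prob_nonneg: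
  assumes "\<And>s s'. s \<in> St \<Longrightarrow> s' \<in> St \<Longrightarrow> K s s' \<ge> 0"
  shows "path_prob St K s0 T P \<ge> 0"
  unfolding path_prob_def using path_weight_nonneg[OF assms] by (intro sum_nonneg) auto

lemma path_prob_mono:
  assumes "finite St" and "\<And>s s'. s \<in> St \<Longrightarrow> s' \<in> St \<Longrightarrow> K s s' \<ge> 0"
    and "\<And>ss. length ss = Suc T \<Longrightarrow> set ss \<subseteq> St \<Longrightarrow> hd ss = s0 \<Longrightarrow> P ss \<Longrightarrow> Q ss"
  shows "path_prob St K s0 T P \<le> path_prob St K s0 T Q"
  unfolding path_prob_as_exp[OF assms(1)] using assms(3)
  by (intro path_exp_mono[OF assms(2)]) auto

lemma path_exp_0: "path_exp St K s0 0 f = (if s0 \<in> St then f [s0] else 0)"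
proof -
  have "{ss. length ss = Suc 0 \<and> set ss \<subseteq> St \<and> hd ss = s0} = (if s0 \<in> St then {[s0]} else {})"
    by (auto simp: length_Suc_conv)
  then show ?thesis unfolding path_exp_def by auto
qed

lemma path_exp_Suc:
  assumes fin: "finite St" and s0: "s0 \<in> St"
  shows "path_exp St K s0 (Suc T) f = (\<Sum>s1\<in>St. K s0 s1 * path_exp St K s1 T (\<lambda>ss. f (s0 # ss)))"
proof -
  let ?L = "\<lambda>n s. {ss. length ss = Suc n \<and> set ss \<subseteq> St \<and> hd ss = s}"
  have eq: "?L (Suc T) s0 = Cons s0 ` (\<Union>s1\<in>St. ?L T s1)"
  proof
    show "?L (Suc T) s0 \<subseteq> Cons s0 ` (\<Union>s1\<in>St. ?L T s1)"
    proof
      fix ss assume "ss \<in> ?L (Suc T) s0"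
      then obtain ss' where ss: "ss = s0 # ss'" "length ss' = Suc T" "set ss' \<subseteq> St"
        by (cases ss) auto
      then have "hd ss' \<in> St" by (cases ss') auto
      with ss show "ss \<in> Cons s0 ` (\<Union>s1\<in>St. ?L T s1)" by blast
    qed
    show "Cons s0 ` (\<Union>s1\<in>St. ?L T s1) \<subseteq> ?L (Suc T) s0" using s0 by auto
  qed
  have "path_exp St K s0 (Suc T) f = (\<Sum>ss\<in>(\<Union>s1\<in>St. ?L T s1).
      (\<Prod>t<Suc T. K ((s0#ss) ! t) ((s0#ss) ! Suc t)) * f (s0#ss))"
    unfolding path_exp_def eq by (subst sum.reindex) (auto simp: inj_on_def)
  also have "\<dots> = (\<Sum>s1\<in>St. \<Sum>ss\<in>?L T s1.
      (\<Prod>t<Suc T. K ((s0#ss) ! t) ((s0#ss) ! Suc t)) * f (s0#ss))"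
    by (rule sum.UNION_disjoint) (auto simp: fin finite_paths)
  also have "\<dots> = (\<Sum>s1\<in>St. K s0 s1 * path_exp St K s1 T (\<lambda>ss. f (s0 # ss)))"
    unfolding path_exp_def sum_distrib_left
  proof (intro sum.cong refl)
    fix s1 ss assume "ss \<in> ?L T s1"
    then have "ss ! 0 = s1" by (cases ss) auto
    then show "(\<Prod>t<Suc T. K ((s0#ss) ! t) ((s0#ss) ! Suc t)) * f (s0#ss) =
        K s0 s1 * ((\<Prod>t<T. K (ss ! t) (ss ! Suc t)) * f (s0 # ss))"
      by (simp add: prod.lessThan_Suc_shift del: prod.lessThan_Suc)
  qed
  finally show ?thesis .
qed

lemma path_exp_const:
  assumes fin: "finite St" and stoch: "\<And>s. s \<in> St \<Longrightarrow> (\<Sum>s'\<in>St. K s s') = 1"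
    and "s0 \<in> St"
  shows "path_exp St K s0 T (\<lambda>_. c) = c"
  using assms(3)
proof (induction T arbitrary: s0)
  case 0 then show ?case by (simp add: path_exp_0)
next
  case (Suc T)
  then show ?case
    using stoch by (simp add: path_exp_Suc[OF fin] sum_distrib_right[symmetric] cong: sum.cong)
qed

section \<open>Doob's maximal inequality\<close>

text \<open>Value of the process N at the first time it exceeds c, or at the final
  time if it never does; N is indexed relative to the head of the list.\<close>
fun stopped_value :: "(nat \<Rightarrow> 'b \<Rightarrow> real) \<Rightarrow> real \<Rightarrow> 'b list \<Rightarrow> real" where
  "stopped_value N c [] = 0"
| "stopped_value N c [s] = N 0 s"
| "stopped_value N c (s # s' # ss) =
     (if N 0 s > c then N 0 s else stopped_value (\<lambda>t. N (Suc t)) c (s' # ss))"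

lemma stopped_value_nonneg:
  "(\<And>t s. s \<in> St \<Longrightarrow> N t s \<ge> 0) \<Longrightarrow> set ss \<subseteq> St \<Longrightarrow> stopped_value N c ss \<ge> 0"
  by (induction N c ss rule: stopped_value.induct) auto

lemma stopped_value_gt:
  "t < length ss \<Longrightarrow> N t (ss ! t) > c \<Longrightarrow> stopped_value N c ss > c"
proof (induction N c ss arbitrary: t rule: stopped_value.induct)
  case (3 N c s s' ss)
  then show ?case by (cases t) auto
qed auto

lemma stopped_value_ge_indicator:
  assumes N0: "\<And>t s. s \<in> St \<Longrightarrow> N t s \<ge> 0" and "length ss = Suc T" and "set ss \<subseteq> St"
  shows "c * (if \<exists>t\<le>T. N t (ss ! t) > c then 1 else 0) \<le> stopped_value N c ss"
proof (cases "\<exists>t\<le>T. N t (ss ! t) > c")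
  case True
  then obtain t where "t \<le> T" "N t (ss ! t) > c" by blast
  then have "c < stopped_value N c ss" using assms(2) by (intro stopped_value_gt[where N=N]) auto
  then show ?thesis using True by simp
next
  case False
  have "stopped_value N c ss \<ge> 0" using assms by (intro stopped_value_nonneg[where St=St]) auto
  then show ?thesis unfolding if_not_P[OF False] by simp
qed

text \<open>The hypotheses are
  premises of the goal so that the induction can shift the time index of N.\<close>
lemma optional_stopping:
  assumes fin: "finite St" and K0: "\<And>s s'. s \<in> St \<Longrightarrow> s' \<in> St \<Longrightarrow> K s s' \<ge> 0"
    and stoch: "\<And>s. s \<in> St \<Longrightarrow> (\<Sum>s'\<in>St. K s s') = 1"
  shows "s0 \<in> St \<Longrightarrow> (\<forall>t. \<forall>s\<in>St. N t s \<ge> 0)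
    \<Longrightarrow> (\<forall>t<T. \<forall>s\<in>St. (\<Sum>s'\<in>St. K s s' * N (Suc t) s') \<le> N t s)
    \<Longrightarrow> path_exp St K s0 T (stopped_value N c) \<le> N 0 s0"
proof (induction T arbitrary: N s0)
  case 0 then show ?case by (simp add: path_exp_0)
next
  case (Suc T)
  note s0 = Suc.prems(1) and N0 = Suc.prems(2) and super = Suc.prems(3)
  show ?case
  proof (cases "N 0 s0 > c")
    case True
    have "path_exp St K s0 (Suc T) (stopped_value N c) = path_exp St K s0 (Suc T) (\<lambda>_. N 0 s0)"
    proof (rule path_exp_cong)
      fix ss :: "'a list" assume "length ss = Suc (Suc T)" and "hd ss = s0"
      then obtain b r where "ss = s0 # b # r" by (auto simp: length_Suc_conv)
      with True show "stopped_value N c ss = N 0 s0" by simp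
    qed
    then show ?thesis by (simp add: path_exp_const[OF fin stoch s0])
  next
    case False
    have "path_exp St K s0 (Suc T) (stopped_value N c)
        = (\<Sum>s1\<in>St. K s0 s1 * path_exp St K s1 T (stopped_value (\<lambda>t. N (Suc t)) c))"
      unfolding path_exp_Suc[OF fin s0]
    proof (intro sum.cong refl arg_cong2[where f="(*)"] path_exp_cong)
      fix ss :: "'a list" assume "length ss = Suc T"
      then obtain s' r where "ss = s' # r" by (cases ss) auto
      with False show "stopped_value N c (s0 # ss) = stopped_value (\<lambda>t. N (Suc t)) c ss" by simp
    qed
    also have "\<dots> \<le> (\<Sum>s1\<in>St. K s0 s1 * N (Suc 0) s1)"
      using Suc.IH[of _ "\<lambda>t. N (Suc t)"] N0 super K0 s0
      by (intro sum_mono mult_left_mono) auto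
    also have "\<dots> \<le> N 0 s0" using super s0 by blast
    finally show ?thesis .
  qed
qed

lemma maximal_inequality:
  assumes fin: "finite St" and K0: "\<And>s s'. s \<in> St \<Longrightarrow> s' \<in> St \<Longrightarrow> K s s' \<ge> 0"
    and stoch: "\<And>s. s \<in> St \<Longrightarrow> (\<Sum>s'\<in>St. K s s') = 1"
    and init: "init \<in> St" and N0: "\<And>t s. s \<in> St \<Longrightarrow> N t s \<ge> 0"
    and super: "\<And>t s. t < T \<Longrightarrow> s \<in> St \<Longrightarrow> (\<Sum>s'\<in>St. K s s' * N (Suc t) s') \<le> N t s"
  shows "path_prob St K init T (\<lambda>ss. \<exists>t\<le>T. N t (ss ! t) > c) = 0
       \<or> c * path_prob St K init T (\<lambda>ss. \<exists>t\<le>T. N t (ss ! t) > c) < N 0 init"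
proof -
  let ?D = "{ss. length ss = Suc T \<and> set ss \<subseteq> St \<and> hd ss = init}"
  let ?w = "\<lambda>ss. \<Prod>t<T. K (ss ! t) (ss ! Suc t)"
  let ?E = "\<lambda>ss. \<exists>t\<le>T. N t (ss ! t) > c"
  let ?I = "\<lambda>ss. if ?E ss then 1 else (0::real)"
  have w0: "?w ss \<ge> 0" if "ss \<in> ?D" for ss
    using that path_weight_nonneg[OF K0] by auto
  have indicator_le: "c * ?I ss \<le> stopped_value N c ss" if "ss \<in> ?D" for ss
    using that by (intro stopped_value_ge_indicator[where St=St and N=N] N0) auto
  have P: "path_prob St K init T ?E = (\<Sum>ss\<in>?D. ?w ss * ?I ss)"
    using path_prob_as_exp[OF fin] unfolding path_exp_def by simp
  show ?thesis
  proof (cases "\<exists>ss\<in>?D. ?w ss * ?I ss \<noteq> 0")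
    case False
    then have "(\<Sum>ss\<in>?D. ?w ss * ?I ss) = 0" by (intro sum.neutral) blast
    then show ?thesis unfolding P by simp
  next
    case True
    then obtain ss0 where ss0: "ss0 \<in> ?D" "?w ss0 > 0" "?E ss0"
      using w0 by (force split: if_splits)
    have "c * path_prob St K init T ?E = (\<Sum>ss\<in>?D. ?w ss * (c * ?I ss))"
      unfolding P sum_distrib_left by (simp add: algebra_simps)
    also have "\<dots> < (\<Sum>ss\<in>?D. ?w ss * stopped_value N c ss)"
    proof (rule sum_strict_mono_ex1)
      show "finite ?D" using fin by (rule finite_paths)
      show "\<forall>ss\<in>?D. ?w ss * (c * ?I ss) \<le> ?w ss * stopped_value N c ss"
        using mult_left_mono[OF indicator_le w0] by simp
      obtain t where "t \<le> T" "N t (ss0 ! t) > c" using ss0(3) by blast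
      then have "c < stopped_value N c ss0"
        using ss0(1) by (intro stopped_value_gt[where N=N]) auto
      then show "\<exists>ss\<in>?D. ?w ss * (c * ?I ss) < ?w ss * stopped_value N c ss"
        using ss0 by (intro bexI[OF _ ss0(1)]) simp
    qed
    also have "\<dots> = path_exp St K init T (stopped_value N c)" unfolding path_exp_def ..
    also have "\<dots> \<le> N 0 init" by (rule optional_stopping[OF fin K0 stoch init]) (use N0 super in auto)
    finally show ?thesis by simp
  qed
qed

section \<open>The lazy random walk\<close>

lemma lazy_p_nonneg: "lazy_p V E x y \<ge> 0"
  unfolding lazy_p_def by auto

text \<open>Degree-weighted average of h over S: the mean of h under the stationary
  measure conditioned on S.\<close>
definition deg_avg :: "'a set \<Rightarrow> ('a \<Rightarrow> 'a \<Rightarrow> bool) \<Rightarrow> ('a \<Rightarrow> real) \<Rightarrow> 'a set \<Rightarrow> real" where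
  "deg_avg V E h S = (\<Sum>y\<in>S. real (deg V E y) * h y) / vol V E S"

context
  fixes V :: "'a set" and E :: "'a \<Rightarrow> 'a \<Rightarrow> bool"
  assumes graph: "simple_graph V E" and pos_deg: "\<forall>v\<in>V. deg V E v > 0"
begin

lemma finite_vertices: "finite V"
  using graph unfolding simple_graph_def by auto

lemma finite_nonempty_subsets: "finite {S. S \<subseteq> V \<and> S \<noteq> {}}"
  using finite_vertices by (auto intro: finite_subset[of _ "Pow V"])

lemma vol_pos: "S \<subseteq> V \<Longrightarrow> S \<noteq> {} \<Longrightarrow> vol V E S > 0"
  unfolding vol_def using pos_deg finite_vertices
  by (intro sum_pos) (auto intro: finite_subset simp: subset_iff)

lemma lazy_p_stochastic: "y \<in> V \<Longrightarrow> (\<Sum>z\<in>V. lazy_p V E y z) = 1"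
proof -
  assume y: "y \<in> V"
  have irr: "\<not> E y y" using graph unfolding simple_graph_def by auto
  let ?d = "real (deg V E y)"
  have eq: "lazy_p V E y z = (if E y z then 1/(2*?d) else 0) + (if z = y then 1/2 else 0)" for z
    using irr unfolding lazy_p_def by auto
  have "(\<Sum>z\<in>V. (if E y z then 1/(2*?d) else 0)) = real (card {z\<in>V. E y z}) * (1/(2*?d))"
    using finite_vertices by (simp add: sum.If_cases Int_def conj_commute)
  also have "\<dots> = 1/2" using pos_deg y unfolding deg_def by simp
  finally show ?thesis
    unfolding eq sum.distrib using finite_vertices y by (simp add: sum.delta)
qed

lemma lazy_p_reversible: "real (deg V E y) * lazy_p V E y z = real (deg V E z) * lazy_p V E z y"
proof -
  have "E y z = E z y" and "E y z \<Longrightarrow> y \<in> V \<and> z \<in> V"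
    using graph unfolding simple_graph_def by blast+
  then show ?thesis unfolding lazy_p_def using pos_deg by auto
qed

lemma lazy_pS_range:
  assumes "y \<in> V" and "S \<subseteq> V"
  shows "0 \<le> lazy_pS V E y S" and "lazy_pS V E y S \<le> 1"
proof -
  show "0 \<le> lazy_pS V E y S" unfolding lazy_pS_def by (intro sum_nonneg lazy_p_nonneg)
  have "lazy_pS V E y S \<le> (\<Sum>z\<in>V. lazy_p V E y z)"
    unfolding lazy_pS_def using finite_vertices assms(2)
    by (intro sum_mono2) (auto intro: lazy_p_nonneg)
  then show "lazy_pS V E y S \<le> 1" using lazy_p_stochastic[OF assms(1)] by simp
qed

section \<open>The volume-biased evolving set process\<close>

text \<open>One ESP step from S contains the vertex y with probability p(y,S): the
  sets {u \<in> [0,1]. new state = S'} for S' \<ni> y partition [0, p(y,S)].\<close>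
lemma esp_K_contains:
  assumes y: "y \<in> V" and S: "S \<subseteq> V"
  shows "(\<Sum>S'\<in>{S'\<in>{S. S \<subseteq> V \<and> S \<noteq> {}}. y \<in> S'}. esp_K V E S S') = lazy_pS V E y S"
proof -
  define B where "B S' = {u\<in>{0..1::real}. {z\<in>V. lazy_pS V E z S \<ge> u} = S'}" for S'
  define Y where "Y = {S'\<in>{S. S \<subseteq> V \<and> S \<noteq> {}}. y \<in> S'}"
  have finY: "finite Y" unfolding Y_def by (rule finite_subset[OF _ finite_nonempty_subsets]) auto
  have B_meas: "B S' \<in> sets lborel" for S'
  proof -
    have "B S' = {u\<in>{0..1::real}. \<forall>z\<in>V. (u \<le> lazy_pS V E z S) = (z \<in> S')}
        \<inter> {_. S' \<subseteq> V}"
      unfolding B_def by auto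
    also have "\<dots> \<in> sets lborel" using finite_vertices by measurable
    finally show ?thesis .
  qed
  have B_fin: "emeasure lborel (B S') \<noteq> \<infinity>" for S'
  proof -
    have "emeasure lborel (B S') \<le> emeasure lborel {0..1::real}"
      by (rule emeasure_mono) (auto simp: B_def)
    then show ?thesis by (auto simp: top_unique)
  qed
  have disj: "disjoint_family_on B Y" unfolding disjoint_family_on_def B_def by auto
  have "(\<Sum>S'\<in>Y. esp_K V E S S') = measure lborel (\<Union>S'\<in>Y. B S')"
    unfolding esp_K_def B_def[symmetric]
    by (rule measure_finite_Union[symmetric]) (use finY B_meas disj B_fin in auto)
  also have "(\<Union>S'\<in>Y. B S') = {0..lazy_pS V E y S}"
    using lazy_pS_range[OF y S] y unfolding B_def Y_def by auto
  finally show ?thesis using lazy_pS_range[OF y S] unfolding Y_def by simp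
qed

lemma esp_hatK_intertwining:
  assumes S: "S \<subseteq> V" "S \<noteq> {}"
  shows "(\<Sum>S'\<in>{S. S \<subseteq> V \<and> S \<noteq> {}}. esp_hatK V E S S' * deg_avg V E h S')
     = deg_avg V E (\<lambda>z. \<Sum>y\<in>V. lazy_p V E z y * h y) S"
proof -
  let ?St = "{S. S \<subseteq> V \<and> S \<noteq> {}}"
  let ?d = "\<lambda>y. real (deg V E y)"
  have "(\<Sum>S'\<in>?St. esp_hatK V E S S' * deg_avg V E h S')
      = (\<Sum>S'\<in>?St. (\<Sum>y\<in>{y\<in>V. y \<in> S'}. esp_K V E S S' * (?d y * h y)) / vol V E S)"
  proof (rule sum.cong[OF refl])
    fix S' assume S': "S' \<in> ?St"
    have "{y\<in>V. y \<in> S'} = S'" using S' by auto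
    then show "esp_hatK V E S S' * deg_avg V E h S' =
        (\<Sum>y\<in>{y\<in>V. y \<in> S'}. esp_K V E S S' * (?d y * h y)) / vol V E S"
      unfolding esp_hatK_def deg_avg_def sum_distrib_left[symmetric]
      using vol_pos[of S'] S' vol_pos[OF S] by (simp add: field_simps)
  qed
  also have "\<dots> = (\<Sum>S'\<in>?St. \<Sum>y\<in>{y\<in>V. y \<in> S'}. esp_K V E S S' * (?d y * h y)) / vol V E S"
    by (rule sum_divide_distrib[symmetric])
  also have "(\<Sum>S'\<in>?St. \<Sum>y\<in>{y\<in>V. y \<in> S'}. esp_K V E S S' * (?d y * h y))
      = (\<Sum>y\<in>V. lazy_pS V E y S * (?d y * h y))"
    unfolding sum.swap_restrict[OF finite_nonempty_subsets finite_vertices]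
    by (intro sum.cong refl) (simp only: sum_distrib_right[symmetric] esp_K_contains S(1))
  also have "\<dots> = (\<Sum>z\<in>S. \<Sum>y\<in>V. lazy_p V E y z * (?d y * h y))"
    unfolding lazy_pS_def sum_distrib_right by (rule sum.swap)
  also have "\<dots> = (\<Sum>z\<in>S. ?d z * (\<Sum>y\<in>V. lazy_p V E z y * h y))"
    unfolding sum_distrib_left
  proof (intro sum.cong refl)
    fix z y
    show "lazy_p V E y z * (?d y * h y) = ?d z * (lazy_p V E z y * h y)"
      using lazy_p_reversible[of y z] by (metis mult.assoc mult.commute)
  qed
  finally show ?thesis unfolding deg_avg_def .
qed

lemma esp_hatK_nonneg: "S' \<subseteq> V \<Longrightarrow> esp_hatK V E S S' \<ge> 0"
  unfolding esp_hatK_def esp_K_def vol_def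
  by (intro mult_nonneg_nonneg divide_nonneg_nonneg sum_nonneg) auto

lemma deg_avg_const: "S \<subseteq> V \<Longrightarrow> S \<noteq> {} \<Longrightarrow> deg_avg V E (\<lambda>_. c) S = c"
  using vol_pos[of S] unfolding deg_avg_def vol_def by (simp add: sum_distrib_right[symmetric])

text \<open>The volume-biased ESP is a Markov chain: intertwining with h = 1.\<close>
lemma esp_hatK_stochastic:
  assumes "S \<subseteq> V" "S \<noteq> {}"
  shows "(\<Sum>S'\<in>{S. S \<subseteq> V \<and> S \<noteq> {}}. esp_hatK V E S S') = 1"
proof -
  have "(\<Sum>S'\<in>{S. S \<subseteq> V \<and> S \<noteq> {}}. esp_hatK V E S S')
      = (\<Sum>S'\<in>{S. S \<subseteq> V \<and> S \<noteq> {}}. esp_hatK V E S S' * deg_avg V E (\<lambda>_. 1) S')"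
    by (intro sum.cong) (auto simp: deg_avg_const)
  also have "\<dots> = deg_avg V E (\<lambda>z. \<Sum>y\<in>V. lazy_p V E z y * 1) S"
    by (rule esp_hatK_intertwining[OF assms])
  also have "\<dots> = deg_avg V E (\<lambda>_. 1) S"
    unfolding deg_avg_def using assms lazy_p_stochastic by (intro arg_cong2[where f="(/)"] sum.cong) auto
  finally show ?thesis using deg_avg_const[OF assms] by simp
qed

section \<open>Escape probabilities\<close>

lemma eps_escape_nonneg: "eps_escape V E y n A \<ge> 0"
  unfolding eps_escape_def by (rule path_prob_nonneg) (rule lazy_p_nonneg)

lemma eps_escape_outside:
  assumes "y \<in> V" "y \<notin> A"
  shows "eps_escape V E y n A = 1"
proof -
  have "eps_escape V E y n A = path_exp V (lazy_p V E) y n (\<lambda>_. 1)"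
    unfolding eps_escape_def path_prob_as_exp[OF finite_vertices]
  proof (rule path_exp_cong)
    fix ss :: "'a list" assume "length ss = Suc n" "hd ss = y"
    then have "ss ! 0 \<notin> A" using assms(2) by (cases ss) auto
    then show "(if \<exists>j\<le>n. ss ! j \<notin> A then 1 else 0) = (1::real)" by auto
  qed
  then show ?thesis using path_exp_const[OF finite_vertices lazy_p_stochastic assms(1)] by simp
qed

text \<open>Superharmonicity: escaping within n steps after one step is less likely
  than escaping within n + 1 steps.\<close>
lemma eps_escape_superharmonic:
  assumes y: "y \<in> V"
  shows "(\<Sum>z\<in>V. lazy_p V E y z * eps_escape V E z n A) \<le> eps_escape V E y (Suc n) A"
proof -
  let ?I = "\<lambda>m ss. if \<exists>j\<le>m. ss ! j \<notin> A then 1 else (0::real)"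
  have "eps_escape V E z n A \<le> path_exp V (lazy_p V E) z n (\<lambda>ss. ?I (Suc n) (y # ss))" for z
    unfolding eps_escape_def path_prob_as_exp[OF finite_vertices]
  proof (rule path_exp_mono)
    fix ss :: "'a list"
    have "\<exists>j\<le>Suc n. (y # ss) ! j \<notin> A" if "j \<le> n" "ss ! j \<notin> A" for j
      using that by (intro exI[of _ "Suc j"]) simp
    then show "?I n ss \<le> ?I (Suc n) (y # ss)" by auto
  qed (rule lazy_p_nonneg)
  then have "(\<Sum>z\<in>V. lazy_p V E y z * eps_escape V E z n A)
      \<le> (\<Sum>z\<in>V. lazy_p V E y z * path_exp V (lazy_p V E) z n (\<lambda>ss. ?I (Suc n) (y # ss)))"
    by (intro sum_mono mult_left_mono lazy_p_nonneg)
  also have "\<dots> = eps_escape V E y (Suc n) A"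
    unfolding eps_escape_def path_prob_as_exp[OF finite_vertices]
    by (rule path_exp_Suc[OF finite_vertices y, symmetric])
  finally show ?thesis .
qed

lemma deg_avg_escape_ge_ratio:
  assumes "S \<subseteq> V" "S \<noteq> {}"
  shows "vol V E (S - A) / vol V E S \<le> deg_avg V E (\<lambda>y. eps_escape V E y n A) S"
proof -
  have "vol V E (S - A) = (\<Sum>y\<in>S - A. real (deg V E y) * eps_escape V E y n A)"
    unfolding vol_def using assms eps_escape_outside by (intro sum.cong) auto
  also have "\<dots> \<le> (\<Sum>y\<in>S. real (deg V E y) * eps_escape V E y n A)"
    using assms finite_vertices eps_escape_nonneg
    by (intro sum_mono2) (auto intro: finite_subset)
  finally show ?thesis
    unfolding deg_avg_def using vol_pos[OF assms] by (intro divide_right_mono) auto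
qed

text \<open>The averaged escape probabilities form a nonnegative supermartingale along
  the volume-biased ESP (intertwining plus superharmonicity).\<close>
lemma escape_supermartingale:
  assumes "t < T" "S \<subseteq> V" "S \<noteq> {}"
  shows "(\<Sum>S'\<in>{S. S \<subseteq> V \<and> S \<noteq> {}}.
            esp_hatK V E S S' * deg_avg V E (\<lambda>y. eps_escape V E y (T - Suc t) A) S')
         \<le> deg_avg V E (\<lambda>y. eps_escape V E y (T - t) A) S"
proof -
  have "T - t = Suc (T - Suc t)" using assms(1) by simp
  then have "deg_avg V E (\<lambda>z. \<Sum>y\<in>V. lazy_p V E z y * eps_escape V E y (T - Suc t) A) S
      \<le> deg_avg V E (\<lambda>y. eps_escape V E y (T - t) A) S"
    unfolding deg_avg_def using assms(2,3) eps_escape_superharmonic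
    by (intro divide_right_mono sum_mono mult_left_mono) (auto simp: vol_def intro: sum_nonneg)
  then show ?thesis unfolding esp_hatK_intertwining[OF assms(2,3)] .
qed

lemma max_ratio_exceeds:
  assumes "length ss = Suc T" and "set ss \<subseteq> {S. S \<subseteq> V \<and> S \<noteq> {}}"
    and "Max ((\<lambda>t. vol V E (ss ! t - A) / vol V E (ss ! t)) ` {0..T}) > c"
  shows "\<exists>t\<le>T. deg_avg V E (\<lambda>y. eps_escape V E y (T - t) A) (ss ! t) > c"
proof -
  obtain t where t: "t \<le> T" "c < vol V E (ss ! t - A) / vol V E (ss ! t)"
    using assms(3) by (subst (asm) Max_gr_iff) auto
  then have "t < length ss" using assms(1) by simp
  then have "ss ! t \<in> {S. S \<subseteq> V \<and> S \<noteq> {}}" using assms(2) nth_mem by blast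
  then have "vol V E (ss ! t - A) / vol V E (ss ! t)
      \<le> deg_avg V E (\<lambda>y. eps_escape V E y (T - t) A) (ss ! t)"
    using deg_avg_escape_ge_ratio by blast
  then show ?thesis using t by (meson less_le_trans)
qed

end

lemma level_bound:
  fixes P Q eps lam :: real
  assumes "lam > 0" "eps \<ge> 0" "P \<le> Q" "Q = 0 \<or> lam * eps * Q < eps"
  shows "P < 1 / lam"
proof -
  have "Q < 1 / lam" using assms(4)
  proof
    assume "Q = 0"
    then show ?thesis using assms(1) by simp
  next
    assume bound: "lam * eps * Q < eps"
    then have "eps > 0" using assms(2) by (cases "eps = 0") auto
    moreover have "eps * (lam * Q) < eps * 1" using bound by (simp add: ac_simps)
    ultimately have "lam * Q < 1" by (simp only: mult_less_cancel_left_pos)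
    then show ?thesis using assms(1) by (simp add: field_simps)
  qed
  with assms(3) show ?thesis by linarith
qed

theorem lemma2:
  fixes V :: "'a set" and E :: "'a \<Rightarrow> 'a \<Rightarrow> bool"
    and x :: 'a and A :: "'a set" and T :: nat and lam :: real
  assumes "simple_graph V E"
    and "\<forall>v\<in>V. deg V E v > 0"
    and "x \<in> V"
    and "A \<subseteq> V"
    and "lam > 0"
  shows "path_prob {S. S \<subseteq> V \<and> S \<noteq> {}} (esp_hatK V E) {x} T
           (\<lambda>ss. Max ((\<lambda>t. vol V E (ss ! t - A) / vol V E (ss ! t)) ` {0..T})
                  > lam * eps_escape V E x T A)
         < 1 / lam"
proof -
  note G = assms(1,2)
  let ?St = "{S. S \<subseteq> V \<and> S \<noteq> {}}" and ?eps = "eps_escape V E x T A"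
  define N where "N t S = deg_avg V E (\<lambda>y. eps_escape V E y (T - t) A) S" for t S
  let ?P = "path_prob ?St (esp_hatK V E) {x} T"
  let ?Max = "\<lambda>ss. Max ((\<lambda>t. vol V E (ss ! t - A) / vol V E (ss ! t)) ` {0..T}) > lam * ?eps"
  let ?Exceed = "\<lambda>ss. \<exists>t\<le>T. N t (ss ! t) > lam * ?eps"
  have K0: "\<And>S S'. S \<in> ?St \<Longrightarrow> S' \<in> ?St \<Longrightarrow> esp_hatK V E S S' \<ge> 0"
    using esp_hatK_nonneg[OF G] by blast
  have K1: "\<And>S. S \<in> ?St \<Longrightarrow> (\<Sum>S'\<in>?St. esp_hatK V E S S') = 1"
    using esp_hatK_stochastic[OF G] by blast
  have N0: "\<And>t S. S \<in> ?St \<Longrightarrow> N t S \<ge> 0"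
    unfolding N_def deg_avg_def vol_def using eps_escape_nonneg[OF G]
    by (intro divide_nonneg_nonneg sum_nonneg mult_nonneg_nonneg) auto
  have start: "N 0 {x} = ?eps" using assms(3) G(2) unfolding N_def deg_avg_def vol_def by simp
  have "?P ?Max \<le> ?P ?Exceed"
  proof (rule path_prob_mono[OF finite_nonempty_subsets[OF G]])
    fix ss assume "length ss = Suc T" "set ss \<subseteq> ?St" "?Max ss"
    then show "?Exceed ss" unfolding N_def by (rule max_ratio_exceeds[OF G])
  qed (rule K0)
  moreover have "?P ?Exceed = 0 \<or> lam * ?eps * ?P ?Exceed < ?eps"
    unfolding start[symmetric]
    by (rule maximal_inequality[OF finite_nonempty_subsets[OF G] K0 K1 _ N0])
       (use assms(3) escape_supermartingale[OF G] in \<open>auto simp: N_def\<close>)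
  ultimately show ?thesis
    by (intro level_bound[OF assms(5) eps_escape_nonneg[OF G]])
qed

end
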